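(* Let $A\bowtie^{\theta} I$ be an amalgamated Banach algebra as in the context and let $((a_\alpha,i_\alpha))_\alpha$ be a net in $A\bowtie^{\theta} I$. Then $((a_\alpha,i_\alpha))_\alpha$ is a left approximate identity for $A\bowtie^{\theta} I$ if and only if $(a_\alpha)_\alpha$ is a left approximate identity for $A$, $(\theta(a_\alpha)+i_\alpha)_\alpha$ is a left approximate identity for the algebra $\theta(A)+I$, and $i_\alpha\theta(a)\to 0$ in norm for every $a\in A$. Moreover, the same equivalence holds with "left approximate identity" replaced by "bounded left approximate identity" throughout.
   Context: Let $A$ and $B$ be Banach algebras, $\theta:A\to B$ a continuous algebra homomorphism with $\|\theta\|\le 1$, and $I$ a closed two-sided ideal of $B$. The amalgamated Banach algebra $A\bowtie^{\theta} I$ is the Banach space $\{(a,i): a\in A,\ i\in I\}$ with norm $\|(a,i)\|=\|a\|+\|i\|$ and product $(a,i)\cdot(a',i')=(aa',\ \theta(a)i'+i\theta(a')+ii')$. Here $\theta(A)+I=\{\theta(a)+j: a\in A, j\in I\}$, a subalgebra of $B$ with the norm of $B$. A net $(e_\alpha)$ in a normed algebra $C$ is a left approximate identity if $e_\alpha c\to c$ for all $c\in C$. *)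

theory Defs
  imports "HOL-Analysis.Analysis"
begin

definition directed :: "('i \<Rightarrow> 'i \<Rightarrow> bool) \<Rightarrow> bool" where
  "directed le \<longleftrightarrow> (\<forall>x. le x x) \<and> (\<forall>x y z. le x y \<longrightarrow> le y z \<longrightarrow> le x z)
      \<and> (\<forall>x y. \<exists>z. le x z \<and> le y z)"

definition net_filter :: "('i \<Rightarrow> 'i \<Rightarrow> bool) \<Rightarrow> 'i filter" where
  "net_filter le = (INF i. principal {j. le i j})"

definition closed_ideal :: "'b::real_normed_algebra set \<Rightarrow> bool" where
  "closed_ideal I \<longleftrightarrow> subspace I \<and> closed I \<and>
      (\<forall>b j. j \<in> I \<longrightarrow> b * j \<in> I \<and> j * b \<in> I)"

definition contractive_alg_hom :: "('a::real_normed_algebra \<Rightarrow> 'b::real_normed_algebra) \<Rightarrow> bool" where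
  "contractive_alg_hom \<theta> \<longleftrightarrow> bounded_linear \<theta> \<and> (\<forall>x y. \<theta> (x * y) = \<theta> x * \<theta> y)
      \<and> (\<forall>x. norm (\<theta> x) \<le> norm x)"

definition amalg_carrier :: "'b set \<Rightarrow> ('a \<times> 'b) set" where
  "amalg_carrier I = UNIV \<times> I"

definition amalg_mult :: "('a::real_normed_algebra \<Rightarrow> 'b::real_normed_algebra)
    \<Rightarrow> 'a \<times> 'b \<Rightarrow> 'a \<times> 'b \<Rightarrow> 'a \<times> 'b" where
  "amalg_mult \<theta> x y = (fst x * fst y, \<theta> (fst x) * snd y + snd x * \<theta> (fst y) + snd x * snd y)"

definition amalg_norm :: "'a::real_normed_vector \<times> 'b::real_normed_vector \<Rightarrow> real" where
  "amalg_norm x = norm (fst x) + norm (snd x)"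

definition theta_plus_ideal :: "('a \<Rightarrow> 'b::plus) \<Rightarrow> 'b set \<Rightarrow> 'b set" where
  "theta_plus_ideal \<theta> I = {\<theta> a + j | a j. j \<in> I}"

definition left_approx_identity ::
  "'i filter \<Rightarrow> 'c::ab_group_add set \<Rightarrow> ('c \<Rightarrow> 'c \<Rightarrow> 'c) \<Rightarrow> ('c \<Rightarrow> real) \<Rightarrow> ('i \<Rightarrow> 'c) \<Rightarrow> bool" where
  "left_approx_identity F S mul nrm e \<longleftrightarrow>
     (\<forall>\<alpha>. e \<alpha> \<in> S) \<and> (\<forall>c\<in>S. ((\<lambda>\<alpha>. nrm (mul (e \<alpha>) c - c)) \<longlongrightarrow> 0) F)"

definition bounded_left_approx_identity ::
  "'i filter \<Rightarrow> 'c::ab_group_add set \<Rightarrow> ('c \<Rightarrow> 'c \<Rightarrow> 'c) \<Rightarrow> ('c \<Rightarrow> real) \<Rightarrow> ('i \<Rightarrow> 'c) \<Rightarrow> bool" where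
  "bounded_left_approx_identity F S mul nrm e \<longleftrightarrow>
     left_approx_identity F S mul nrm e \<and> (\<exists>M. \<forall>\<alpha>. nrm (e \<alpha>) \<le> M)"

end

theory Submission
  imports Defs
begin

text \<open>Put \<open>e = \<theta>(a) + i\<close>. Testing the net \<open>(a, i)\<close> against \<open>(x, j)\<close> gives
  \<open>\<parallel>(a, i)(x, j) - (x, j)\<parallel> = \<parallel>a x - x\<parallel> + \<parallel>e j - j + i \<theta>(x)\<parallel>\<close>, while
  \<open>e (\<theta>(x) + j) - (\<theta>(x) + j) = \<theta>(a x - x) + (e j - j + i \<theta>(x))\<close> and \<open>\<theta>\<close> is contractive.
  Taking \<open>j = 0\<close> separates the first summand from \<open>i \<theta>(x)\<close>, and the triangle inequality
  gives the rest. Boundedness transfers because \<open>\<parallel>i\<parallel> \<le> \<parallel>e\<parallel> + \<parallel>a\<parallel>\<close>.\<close>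

lemma amalg_norm_mult_diff:
  "amalg_norm (amalg_mult \<theta> (a, i) (x, j) - (x, j))
     = norm (a * x - x) + norm ((\<theta> a + i) * j - j + i * \<theta> x)"
  by (simp add: amalg_mult_def amalg_norm_def algebra_simps)

lemma contractive_alg_hom_diff:
  "contractive_alg_hom \<theta> \<Longrightarrow> \<theta> (x - y) = \<theta> x - \<theta> y"
  unfolding contractive_alg_hom_def by (simp add: linear_diff bounded_linear.linear)

lemma theta_plus_ideal_mult_diff:
  assumes "contractive_alg_hom \<theta>"
  shows "(\<theta> a + i) * (\<theta> x + j) - (\<theta> x + j) = \<theta> (a * x - x) + ((\<theta> a + i) * j - j + i * \<theta> x)"
  using assms contractive_alg_hom_diff[OF assms]
  by (simp add: contractive_alg_hom_def algebra_simps)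

lemma norm_theta_plus_ideal_mult_diff_le:
  assumes "contractive_alg_hom \<theta>"
  shows "norm ((\<theta> a + i) * (\<theta> x + j) - (\<theta> x + j))
           \<le> norm (a * x - x) + norm ((\<theta> a + i) * j - j + i * \<theta> x)"
proof -
  have "norm (\<theta> (a * x - x)) \<le> norm (a * x - x)"
    using assms by (simp add: contractive_alg_hom_def)
  then show ?thesis
    unfolding theta_plus_ideal_mult_diff[OF assms]
    by (meson add_right_mono norm_triangle_ineq order_trans)
qed

lemma tendsto_zero_if_nonneg_le:
  fixes f g :: "'i \<Rightarrow> real"
  assumes "(g \<longlongrightarrow> 0) F" "\<And>\<alpha>. 0 \<le> f \<alpha>" "\<And>\<alpha>. f \<alpha> \<le> g \<alpha>"
  shows "(f \<longlongrightarrow> 0) F"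
  using assms by (intro tendsto_sandwich[of "\<lambda>_. 0" f F g]) auto

lemma tendsto_zero_add_nonnegD:
  fixes f g :: "'i \<Rightarrow> real"
  assumes "((\<lambda>\<alpha>. f \<alpha> + g \<alpha>) \<longlongrightarrow> 0) F" "\<And>\<alpha>. 0 \<le> f \<alpha>" "\<And>\<alpha>. 0 \<le> g \<alpha>"
  shows "(f \<longlongrightarrow> 0) F" "(g \<longlongrightarrow> 0) F"
  using assms by (auto intro: tendsto_zero_if_nonneg_le[OF assms(1)])

lemma left_approx_identity_amalgD:
  fixes \<theta> :: "'a::real_normed_algebra \<Rightarrow> 'b::real_normed_algebra"
  assumes \<theta>: "contractive_alg_hom \<theta>" and "0 \<in> I"
    and lai: "left_approx_identity F (amalg_carrier I) (amalg_mult \<theta>) amalg_norm (\<lambda>\<alpha>. (a \<alpha>, i \<alpha>))"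
  shows "left_approx_identity F UNIV (*) norm a"
    and "left_approx_identity F (theta_plus_ideal \<theta> I) (*) norm (\<lambda>\<alpha>. \<theta> (a \<alpha>) + i \<alpha>)"
    and "((\<lambda>\<alpha>. norm (i \<alpha> * \<theta> x)) \<longlongrightarrow> 0) F"
proof -
  have test: "((\<lambda>\<alpha>. norm (a \<alpha> * x - x) + norm ((\<theta> (a \<alpha>) + i \<alpha>) * j - j + i \<alpha> * \<theta> x)) \<longlongrightarrow> 0) F"
    if "j \<in> I" for x j
  proof -
    have "(x, j) \<in> amalg_carrier I"
      using that by (simp add: amalg_carrier_def)
    then have "((\<lambda>\<alpha>. amalg_norm (amalg_mult \<theta> (a \<alpha>, i \<alpha>) (x, j) - (x, j))) \<longlongrightarrow> 0) F"
      using lai unfolding left_approx_identity_def by blast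
    then show ?thesis
      by (simp only: amalg_norm_mult_diff)
  qed
  note test_zero = tendsto_zero_add_nonnegD[OF test[OF \<open>0 \<in> I\<close>], simplified]
  have i_in_I: "i \<alpha> \<in> I" for \<alpha>
    using lai by (simp add: left_approx_identity_def amalg_carrier_def)
  show "left_approx_identity F UNIV (*) norm a"
    using test_zero(1) by (simp add: left_approx_identity_def)
  show "((\<lambda>\<alpha>. norm (i \<alpha> * \<theta> x)) \<longlongrightarrow> 0) F"
    using test_zero(2) .
  show "left_approx_identity F (theta_plus_ideal \<theta> I) (*) norm (\<lambda>\<alpha>. \<theta> (a \<alpha>) + i \<alpha>)"
    unfolding left_approx_identity_def
  proof (intro conjI allI ballI)
    show "\<theta> (a \<alpha>) + i \<alpha> \<in> theta_plus_ideal \<theta> I" for \<alpha>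
      using i_in_I by (auto simp: theta_plus_ideal_def)
    fix c assume "c \<in> theta_plus_ideal \<theta> I"
    then obtain x j where c: "c = \<theta> x + j" and "j \<in> I"
      by (auto simp: theta_plus_ideal_def)
    show "((\<lambda>\<alpha>. norm ((\<theta> (a \<alpha>) + i \<alpha>) * c - c)) \<longlongrightarrow> 0) F"
      unfolding c
      by (rule tendsto_zero_if_nonneg_le[OF test[OF \<open>j \<in> I\<close>, of x]])
         (simp_all only: norm_ge_zero norm_theta_plus_ideal_mult_diff_le[OF \<theta>])
  qed
qed

lemma left_approx_identity_amalgI:
  fixes \<theta> :: "'a::real_normed_algebra \<Rightarrow> 'b::real_normed_algebra"
  assumes "contractive_alg_hom \<theta>" and "\<forall>\<alpha>. i \<alpha> \<in> I"
    and lai_A: "left_approx_identity F UNIV (*) norm a"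
    and lai_sum: "left_approx_identity F (theta_plus_ideal \<theta> I) (*) norm (\<lambda>\<alpha>. \<theta> (a \<alpha>) + i \<alpha>)"
    and i_theta: "\<And>x. ((\<lambda>\<alpha>. norm (i \<alpha> * \<theta> x)) \<longlongrightarrow> 0) F"
  shows "left_approx_identity F (amalg_carrier I) (amalg_mult \<theta>) amalg_norm (\<lambda>\<alpha>. (a \<alpha>, i \<alpha>))"
  unfolding left_approx_identity_def
proof (intro conjI allI ballI)
  show "(a \<alpha>, i \<alpha>) \<in> amalg_carrier I" for \<alpha>
    using assms(2) by (simp add: amalg_carrier_def)
  fix c :: "'a \<times> 'b" assume "c \<in> amalg_carrier I"
  then obtain x j where c: "c = (x, j)" and "j \<in> I"
    by (auto simp: amalg_carrier_def)
  have "\<theta> 0 + j \<in> theta_plus_ideal \<theta> I"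
    using \<open>j \<in> I\<close> by (auto simp: theta_plus_ideal_def)
  then have "j \<in> theta_plus_ideal \<theta> I"
    using assms(1) by (simp add: contractive_alg_hom_def linear_simps)
  then have "((\<lambda>\<alpha>. norm (a \<alpha> * x - x) + (norm ((\<theta> (a \<alpha>) + i \<alpha>) * j - j) + norm (i \<alpha> * \<theta> x))) \<longlongrightarrow> 0) F"
    using lai_A lai_sum i_theta[of x] unfolding left_approx_identity_def
    by (auto intro!: tendsto_add_zero)
  then show "((\<lambda>\<alpha>. amalg_norm (amalg_mult \<theta> (a \<alpha>, i \<alpha>) c - c)) \<longlongrightarrow> 0) F"
    unfolding c amalg_norm_mult_diff
    by (rule tendsto_zero_if_nonneg_le) (auto intro: add_left_mono norm_triangle_ineq)
qed

lemma left_approx_identity_amalg_iff: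
  fixes \<theta> :: "'a::real_normed_algebra \<Rightarrow> 'b::real_normed_algebra"
  assumes "contractive_alg_hom \<theta>" and "0 \<in> I" and "\<forall>\<alpha>. i \<alpha> \<in> I"
  shows "left_approx_identity F (amalg_carrier I) (amalg_mult \<theta>) amalg_norm (\<lambda>\<alpha>. (a \<alpha>, i \<alpha>))
          \<longleftrightarrow> left_approx_identity F UNIV (*) norm a
            \<and> left_approx_identity F (theta_plus_ideal \<theta> I) (*) norm (\<lambda>\<alpha>. \<theta> (a \<alpha>) + i \<alpha>)
            \<and> (\<forall>x. ((\<lambda>\<alpha>. norm (i \<alpha> * \<theta> x)) \<longlongrightarrow> 0) F)"
  using left_approx_identity_amalgD[OF assms(1,2)] left_approx_identity_amalgI[OF assms(1,3)]
  by (intro iffI conjI allI) auto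

lemma amalg_norm_bounded_iff:
  assumes "contractive_alg_hom \<theta>"
  shows "(\<exists>M. \<forall>\<alpha>. amalg_norm (a \<alpha>, i \<alpha>) \<le> M) \<longleftrightarrow>
           (\<exists>M. \<forall>\<alpha>. norm (a \<alpha>) \<le> M) \<and> (\<exists>M. \<forall>\<alpha>. norm (\<theta> (a \<alpha>) + i \<alpha>) \<le> M)"
proof -
  have contr: "norm (\<theta> x) \<le> norm x" for x
    using assms by (simp add: contractive_alg_hom_def)
  have upper: "norm (\<theta> (a \<alpha>) + i \<alpha>) \<le> amalg_norm (a \<alpha>, i \<alpha>)" for \<alpha>
    using contr[of "a \<alpha>"] norm_triangle_ineq[of "\<theta> (a \<alpha>)" "i \<alpha>"]
    by (simp add: amalg_norm_def)
  have lower: "amalg_norm (a \<alpha>, i \<alpha>) \<le> 2 * norm (a \<alpha>) + norm (\<theta> (a \<alpha>) + i \<alpha>)" for \<alpha>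
    using contr[of "a \<alpha>"] norm_triangle_ineq4[of "\<theta> (a \<alpha>) + i \<alpha>" "\<theta> (a \<alpha>)"]
    by (simp add: amalg_norm_def)
  show ?thesis
  proof
    assume "\<exists>M. \<forall>\<alpha>. amalg_norm (a \<alpha>, i \<alpha>) \<le> M"
    then obtain M where M: "\<And>\<alpha>. amalg_norm (a \<alpha>, i \<alpha>) \<le> M" by blast
    have "norm (a \<alpha>) \<le> amalg_norm (a \<alpha>, i \<alpha>)" for \<alpha>
      by (simp add: amalg_norm_def)
    then have "norm (a \<alpha>) \<le> M" for \<alpha>
      using M order_trans by blast
    moreover have "norm (\<theta> (a \<alpha>) + i \<alpha>) \<le> M" for \<alpha>
      using M upper order_trans by blast
    ultimately show "(\<exists>M. \<forall>\<alpha>. norm (a \<alpha>) \<le> M) \<and> (\<exists>M. \<forall>\<alpha>. norm (\<theta> (a \<alpha>) + i \<alpha>) \<le> M)"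
      by blast
  next
    assume "(\<exists>M. \<forall>\<alpha>. norm (a \<alpha>) \<le> M) \<and> (\<exists>M. \<forall>\<alpha>. norm (\<theta> (a \<alpha>) + i \<alpha>) \<le> M)"
    then obtain M N where M: "\<And>\<alpha>. norm (a \<alpha>) \<le> M" and N: "\<And>\<alpha>. norm (\<theta> (a \<alpha>) + i \<alpha>) \<le> N"
      by blast
    have "amalg_norm (a \<alpha>, i \<alpha>) \<le> 2 * M + N" for \<alpha>
      using lower[of \<alpha>] M[of \<alpha>] N[of \<alpha>] by linarith
    then show "\<exists>M. \<forall>\<alpha>. amalg_norm (a \<alpha>, i \<alpha>) \<le> M" by blast
  qed
qed

theorem proposition2p1:
  fixes \<theta> :: "'a::{real_normed_algebra,banach} \<Rightarrow> 'b::{real_normed_algebra,banach}"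
    and I :: "'b set"
    and le :: "'i \<Rightarrow> 'i \<Rightarrow> bool"
    and a :: "'i \<Rightarrow> 'a" and i :: "'i \<Rightarrow> 'b"
  assumes "contractive_alg_hom \<theta>"
    and "closed_ideal I"
    and "directed le"
    and "\<forall>\<alpha>. i \<alpha> \<in> I"
  shows "(left_approx_identity (net_filter le) (amalg_carrier I) (amalg_mult \<theta>) amalg_norm
            (\<lambda>\<alpha>. (a \<alpha>, i \<alpha>))
          \<longleftrightarrow> left_approx_identity (net_filter le) UNIV (*) norm a
            \<and> left_approx_identity (net_filter le) (theta_plus_ideal \<theta> I) (*) norm
                (\<lambda>\<alpha>. \<theta> (a \<alpha>) + i \<alpha>)
            \<and> (\<forall>x. ((\<lambda>\<alpha>. norm (i \<alpha> * \<theta> x)) \<longlongrightarrow> 0) (net_filter le)))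
       \<and> (bounded_left_approx_identity (net_filter le) (amalg_carrier I) (amalg_mult \<theta>) amalg_norm
            (\<lambda>\<alpha>. (a \<alpha>, i \<alpha>))
          \<longleftrightarrow> bounded_left_approx_identity (net_filter le) UNIV (*) norm a
            \<and> bounded_left_approx_identity (net_filter le) (theta_plus_ideal \<theta> I) (*) norm
                (\<lambda>\<alpha>. \<theta> (a \<alpha>) + i \<alpha>)
            \<and> (\<forall>x. ((\<lambda>\<alpha>. norm (i \<alpha> * \<theta> x)) \<longlongrightarrow> 0) (net_filter le)))"
proof -
  have "0 \<in> I"
    using assms(2) by (simp add: closed_ideal_def subspace_0)
  note lai_iff = left_approx_identity_amalg_iff[OF assms(1) this assms(4), of "net_filter le" a]
  show ?thesis
    unfolding bounded_left_approx_identity_def lai_iff amalg_norm_bounded_iff[OF assms(1)]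
    by blast
qed

end
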